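(* Let $S=\{p_1,\dots,p_n\}$ be a set of point sites in $\mathbb{R}^d$ with an admissible system of distance functions $\{d_{p_i}\}$, and let $C\subset\mathbb{R}^d$ be a bounded, open, path-connected set. Let $T\subset S$ with $T\neq\emptyset$ and $T\neq S$. Let $w=(w_1,\dots,w_n)$ be a weight vector such that $\mu(C\cap\mathrm{VR}_w(p,S))>0$ for every $p\in S$. Let $\delta>0$ and define $w'$ by $w'_i=w_i+\delta$ if $p_i\in T$ and $w'_i=w_i$ otherwise. Then there exists $t\in T$ with $\mu(C\cap\mathrm{VR}_{w'}(t,S))>\mu(C\cap\mathrm{VR}_w(t,S))$.
   Context: $\mu$ is a measure defined on all Lebesgue-measurable subsets of $\mathbb{R}^d$ such that $\mu$ and $d$-dimensional Lebesgue measure are mutually absolutely continuous. Each site $p\in S$ has a continuous function $d_p:\mathbb{R}^d\to\mathbb{R}_{\ge 0}$. For $p\neq q\in S$ and $\gamma\in\mathbb{R}$ let $R_\gamma(p,q)=\{z\in\mathbb{R}^d : d_p(z)-d_q(z)<\gamma\}$. The system $\{d_p\}_{p\in S}$ is called admissible if for all $p\neq q\in S$ and every bounded open set $C\subset\mathbb{R}^d$ there exist real numbers $m_{pq}<M_{pq}$ such that the function $\gamma\mapsto\mu(C\cap R_\gamma(p,q))$ is continuous on $\mathbb{R}$ and increases (monotonically) from $0$ to $\mu(C)$ as $\gamma$ grows from $m_{pq}$ to $M_{pq}$; moreover $C\cap R_\gamma(p,q)=\emptyset$ for $\gamma\le m_{pq}$ and $C\subset R_\gamma(p,q)$ for $\gamma\ge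 M_{pq}$. For a weight vector $w$, the additively weighted Voronoi region is $\mathrm{VR}_w(p_i,S)=\bigcap_{j\neq i}R_{w_i-w_j}(p_i,p_j)$, i.e. the set of $z$ with $d_{p_i}(z)-w_i<d_{p_j}(z)-w_j$ for all $j\neq i$. *)

theory Defs
  imports "HOL-Analysis.Analysis"
begin

text \<open>Sites are points of the Euclidean space 'a; d p is the distance function of site p.\<close>

definition Rgam :: "('a \<Rightarrow> 'a \<Rightarrow> real) \<Rightarrow> 'a \<Rightarrow> 'a \<Rightarrow> real \<Rightarrow> 'a set" where
  "Rgam d p q \<gamma> = {z. d p z - d q z < \<gamma>}"

definition VR :: "('a \<Rightarrow> 'a \<Rightarrow> real) \<Rightarrow> ('a \<Rightarrow> real) \<Rightarrow> 'a set \<Rightarrow> 'a \<Rightarrow> 'a set" where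
  "VR d w S p = (\<Inter>q\<in>S - {p}. Rgam d p q (w p - w q))"

definition admissible ::
  "('a::euclidean_space) measure \<Rightarrow> ('a \<Rightarrow> 'a \<Rightarrow> real) \<Rightarrow> 'a set \<Rightarrow> bool" where
  "admissible \<mu> d S \<longleftrightarrow>
     (\<forall>p\<in>S. \<forall>q\<in>S. p \<noteq> q \<longrightarrow> (\<forall>C. bounded C \<and> open C \<longrightarrow>
        (\<exists>m M. m < M
           \<and> emeasure \<mu> C < \<infinity>
           \<and> continuous_on UNIV (\<lambda>\<gamma>. measure \<mu> (C \<inter> Rgam d p q \<gamma>))
           \<and> mono_on {m..M} (\<lambda>\<gamma>. measure \<mu> (C \<inter> Rgam d p q \<gamma>))
           \<and> (\<forall>\<gamma>\<le>m. C \<inter> Rgam d p q \<gamma> = {})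
           \<and> (\<forall>\<gamma>\<ge>M. C \<subseteq> Rgam d p q \<gamma>))))"

end

theory Submission
  imports Defs
begin

(* Write w' for the shifted weights.  Let Q' be the set of points where, under w', some
   site of T beats every site outside T, and Q the set of points where, under w, some
   site outside T beats every site of T.  Both are open, together they cover everything
   (a point missed by Q' is won by an outside site by a margin of \<delta>), and each meets C
   (it contains a nonempty cell).  As C is connected, O = C \<inter> Q \<inter> Q' is a nonempty open
   set and so has positive measure.  Admissibility makes the tie sets
   {d t - d t' = w t - w t'} null, and at a tie-free point of O the site of T that is
   best under w lies in its w'-cell but not in its w-cell.  So the gains
   C \<inter> VR w' t - C \<inter> VR w t (t \<in> T) cover O up to a null set, one of them has
   positive measure, and that cell has grown. *)

lemma open_in_sets_lebesgue: "open A \<Longrightarrow> A \<in> sets lebesgue"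
  by (metis borel_open sets_completionI_sets sets_lborel)

lemma closed_in_sets_lebesgue: "closed A \<Longrightarrow> A \<in> sets lebesgue"
  by (metis borel_closed sets_completionI_sets sets_lborel)

lemma finite_has_minimizer:
  fixes f :: "'b \<Rightarrow> real"
  assumes "finite A" "A \<noteq> {}"
  obtains a where "a \<in> A" "\<And>b. b \<in> A \<Longrightarrow> f a \<le> f b"
  using arg_min_if_finite(1)[OF assms, of f] arg_min_least[OF assms, of _ f] by blast

definition shift_weights :: "('a \<Rightarrow> real) \<Rightarrow> 'a set \<Rightarrow> real \<Rightarrow> 'a \<Rightarrow> real" where
  "shift_weights w T \<delta> = (\<lambda>p. if p \<in> T then w p + \<delta> else w p)"

definition group_wins :: "('a \<Rightarrow> 'a \<Rightarrow> real) \<Rightarrow> ('a \<Rightarrow> real) \<Rightarrow> 'a set \<Rightarrow> 'a set \<Rightarrow> 'a set" where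
  "group_wins d w S A = (\<Union>a\<in>A. \<Inter>b\<in>S - A. {z. d a z - w a < d b z - w b})"

lemma open_VR:
  assumes "finite S" "p \<in> S" "\<And>q. q \<in> S \<Longrightarrow> continuous_on UNIV (d q)"
  shows "open (VR d w S p)"
  unfolding VR_def Rgam_def
  using assms by (intro open_INT ballI open_Collect_less continuous_intros) auto

lemma open_group_wins:
  assumes "finite S" "A \<subseteq> S" "\<And>q. q \<in> S \<Longrightarrow> continuous_on UNIV (d q)"
  shows "open (group_wins d w S A)"
  unfolding group_wins_def
  using assms by (intro open_UN open_INT ballI open_Collect_less continuous_intros) auto

lemma VR_mono_weights:
  assumes "\<And>q. q \<in> S - {p} \<Longrightarrow> w p - w q \<le> w' p - w' q"
  shows "VR d w S p \<subseteq> VR d w' S p"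
proof
  fix z assume z: "z \<in> VR d w S p"
  have "d p z - d q z < w' p - w' q" if "q \<in> S - {p}" for q
    using z assms[OF that] that unfolding VR_def Rgam_def by force
  then show "z \<in> VR d w' S p" unfolding VR_def Rgam_def by blast
qed

lemma VR_subset_group_wins:
  assumes "p \<in> A"
  shows "VR d w S p \<subseteq> group_wins d w S A"
proof
  fix z assume z: "z \<in> VR d w S p"
  have "d p z - w p < d q z - w q" if "q \<in> S - A" for q
    using z that assms unfolding VR_def Rgam_def by force
  then show "z \<in> group_wins d w S A" unfolding group_wins_def using assms by blast
qed

text \<open>If after the shift no site of \<open>T\<close> wins at \<open>z\<close>, then already before the shift an
  outside site beat the best site of \<open>T\<close> by the margin \<open>\<delta>\<close>, hence beat all of \<open>T\<close>.\<close>

lemma group_wins_cover: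
  assumes "finite T" "T \<noteq> {}" "T \<subseteq> S" "\<delta> > 0"
  shows "group_wins d (shift_weights w T \<delta>) S T \<union> group_wins d w S (S - T) = UNIV"
proof (intro set_eqI iffI UNIV_I)
  fix z
  obtain t0 where t0: "t0 \<in> T" "\<And>t. t \<in> T \<Longrightarrow> d t0 z - w t0 \<le> d t z - w t"
    using finite_has_minimizer[OF assms(1,2), where f = "\<lambda>t. d t z - w t"] by blast
  show "z \<in> group_wins d (shift_weights w T \<delta>) S T \<union> group_wins d w S (S - T)"
  proof (cases "z \<in> group_wins d (shift_weights w T \<delta>) S T")
    case False
    then obtain q where q: "q \<in> S - T" "d q z - w q \<le> d t0 z - w t0 - \<delta>"
      using t0(1) by (force simp: group_wins_def shift_weights_def)
    have "d q z - w q < d t z - w t" if "t \<in> T" for t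
      using q(2) t0(2)[OF that] assms(4) by linarith
    moreover have "S - (S - T) = T" using assms(3) by blast
    ultimately have "z \<in> group_wins d w S (S - T)"
      using q(1) unfolding group_wins_def by blast
    then show ?thesis by blast
  qed blast
qed

lemma shift_gains_point:
  assumes T: "finite T" "T \<noteq> {}" "T \<subseteq> S"
    and z_new: "z \<in> group_wins d (shift_weights w T \<delta>) S T"
    and z_old: "z \<in> group_wins d w S (S - T)"
    and no_tie: "\<And>t t'. t \<in> T \<Longrightarrow> t' \<in> T \<Longrightarrow> t \<noteq> t' \<Longrightarrow> d t z - d t' z \<noteq> w t - w t'"
  shows "\<exists>t\<in>T. z \<in> VR d (shift_weights w T \<delta>) S t - VR d w S t"
proof -
  obtain t0 where t0: "t0 \<in> T" "\<And>t. t \<in> T \<Longrightarrow> d t0 z - w t0 \<le> d t z - w t"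
    using finite_has_minimizer[OF T(1,2), where f = "\<lambda>t. d t z - w t"] by blast
  have "d t0 z - d q z < shift_weights w T \<delta> t0 - shift_weights w T \<delta> q"
    if q: "q \<in> S" "q \<noteq> t0" for q
  proof (cases "q \<in> T")
    case True
    have "d t0 z - w t0 \<le> d q z - w q" "d t0 z - d q z \<noteq> w t0 - w q"
      using t0 True q(2) no_tie[of t0 q] by auto
    then have "d t0 z - d q z < w t0 - w q" by linarith
    then show ?thesis using True t0(1) by (simp add: shift_weights_def)
  next
    case False
    then obtain t where t: "t \<in> T" "d t z - (w t + \<delta>) < d q z - w q"
      using z_new q(1) by (auto simp: group_wins_def shift_weights_def)
    have "d t0 z - w t0 \<le> d t z - w t" using t0(2)[OF t(1)] .
    then have "d t0 z - d q z < (w t0 + \<delta>) - w q" using t(2) by linarith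
    then show ?thesis using False t0(1) by (simp add: shift_weights_def)
  qed
  then have "z \<in> VR d (shift_weights w T \<delta>) S t0"
    unfolding VR_def Rgam_def by blast
  moreover have "z \<notin> VR d w S t0"
  proof
    assume z_cell: "z \<in> VR d w S t0"
    have "S - (S - T) = T" using T(3) by blast
    then obtain q where q: "q \<in> S - T" "d q z - w q < d t0 z - w t0"
      using z_old t0(1) unfolding group_wins_def by blast
    then have "q \<in> S - {t0}" using t0(1) by blast
    then have "d t0 z - d q z < w t0 - w q"
      using z_cell unfolding VR_def Rgam_def by blast
    with q(2) show False by linarith
  qed
  ultimately show ?thesis using t0(1) by blast
qed

text \<open>Admissibility forces the tie sets \<open>{d p - d q = \<gamma>}\<close> to be null inside any bounded open
  \<open>C\<close>: the tie set lies in \<open>R_{\<gamma>+e} - R_\<gamma>\<close>, whose measure tends to \<open>0\<close> as \<open>e \<rightarrow> 0\<close> by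
  continuity of \<open>\<gamma> \<mapsto> \<mu>(C \<inter> R_\<gamma>)\<close>.\<close>

lemma admissible_tie_null:
  fixes \<mu> :: "('a::euclidean_space) measure"
  assumes mu_sets: "sets \<mu> = sets lebesgue"
    and adm: "admissible \<mu> d S" and pq: "p \<in> S" "q \<in> S" "p \<noteq> q"
    and C: "bounded C" "open C"
    and cont: "continuous_on UNIV (d p)" "continuous_on UNIV (d q)"
  shows "C \<inter> {z. d p z - d q z = \<gamma>} \<in> null_sets \<mu>"
proof -
  define F where "F = (\<lambda>\<gamma>. measure \<mu> (C \<inter> Rgam d p q \<gamma>))"
  define E where "E = C \<inter> {z. d p z - d q z = \<gamma>}"
  from adm pq C have C_fin: "emeasure \<mu> C < \<infinity>" and F_cont: "continuous_on UNIV F"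
    unfolding admissible_def F_def by blast+
  have diff_cont: "continuous_on UNIV (\<lambda>z. d p z - d q z)" using cont by (intro continuous_intros)
  have R_sets: "C \<inter> Rgam d p q g \<in> sets \<mu>" for g
    unfolding mu_sets Rgam_def
    by (intro open_in_sets_lebesgue open_Int C open_Collect_less diff_cont continuous_intros)
  have E_sets: "E \<in> sets \<mu>" unfolding mu_sets E_def
    by (intro sets.Int open_in_sets_lebesgue closed_in_sets_lebesgue C closed_Collect_eq
        diff_cont continuous_intros)
  have C_sets: "C \<in> sets \<mu>" unfolding mu_sets using C open_in_sets_lebesgue by blast
  have finite_in_C: "emeasure \<mu> A \<noteq> \<infinity>" if "A \<subseteq> C" for A
    using C_fin emeasure_mono[OF that C_sets] by (auto simp: top_unique)
  have E_fin: "emeasure \<mu> E \<noteq> \<infinity>" unfolding E_def by (rule finite_in_C) blast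
  have R_fin: "emeasure \<mu> (C \<inter> Rgam d p q g) \<noteq> \<infinity>" for g by (rule finite_in_C) blast
  have bound: "measure \<mu> E \<le> F (\<gamma> + e) - F \<gamma>" if "e > 0" for e
  proof -
    let ?G = "C \<inter> Rgam d p q (\<gamma> + e) - C \<inter> Rgam d p q \<gamma>"
    have "E \<subseteq> ?G" using that unfolding E_def Rgam_def by auto
    moreover have "?G \<in> fmeasurable \<mu>"
      using R_fin R_sets by (auto simp: fmeasurable_def less_top intro!: sets.Diff
          order.strict_trans1[OF emeasure_mono[OF Diff_subset]])
    ultimately have "measure \<mu> E \<le> measure \<mu> ?G"
      using E_sets by (metis measure_mono_fmeasurable)
    also have "\<dots> = F (\<gamma> + e) - F \<gamma>" unfolding F_def
      using that by (intro measure_Diff R_fin R_sets) (auto simp: Rgam_def)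
    finally show ?thesis .
  qed
  have "(\<lambda>n. \<gamma> + 1 / real (Suc n)) \<longlonglongrightarrow> \<gamma> + 0"
    by (intro tendsto_intros LIMSEQ_Suc[OF lim_1_over_n])
  then have "(\<lambda>n. F (\<gamma> + 1 / real (Suc n))) \<longlonglongrightarrow> F \<gamma>"
    using F_cont by (auto intro: isCont_tendsto_compose simp: continuous_on_eq_continuous_at)
  then have "(\<lambda>n. F (\<gamma> + 1 / real (Suc n)) - F \<gamma>) \<longlonglongrightarrow> F \<gamma> - F \<gamma>"
    by (intro tendsto_intros)
  then have "measure \<mu> E \<le> F \<gamma> - F \<gamma>"
    by (rule LIMSEQ_le_const) (auto intro!: bound)
  then have "measure \<mu> E = 0" using measure_nonneg[of \<mu> E] by linarith
  then have "emeasure \<mu> E = 0" using E_fin by (simp add: emeasure_eq_ennreal_measure)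
  then show ?thesis using E_sets E_def by (auto intro: null_setsI)
qed

lemma open_nonempty_not_null:
  fixes \<mu> :: "('a::euclidean_space) measure"
  assumes "sets \<mu> = sets lebesgue"
    and "\<And>A. A \<in> sets lebesgue \<Longrightarrow> (emeasure \<mu> A = 0 \<longleftrightarrow> emeasure lebesgue A = 0)"
    and "open U" "U \<noteq> {}"
  shows "U \<notin> null_sets \<mu>"
  using assms open_not_negligible negligible_iff_emeasure0 open_in_sets_lebesgue by blast

lemma emeasure_less_if_diff_not_null:
  assumes "A \<subseteq> B" "A \<in> sets M" "B \<in> sets M" "emeasure M A \<noteq> \<infinity>"
    and "B - A \<notin> null_sets M"
  shows "emeasure M A < emeasure M B"
proof (rule ccontr)
  assume "\<not> ?thesis"
  then have "emeasure M B \<le> emeasure M A" by simp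
  then have "emeasure M B - emeasure M A = 0"
    using assms(4) by (intro diff_eq_0_ennreal) (auto simp: top.not_eq_extremum)
  then have "emeasure M (B - A) = 0"
    using assms(1-4) by (simp add: emeasure_Diff)
  with assms(2,3,5) show False by (auto intro: null_setsI)
qed

text \<open>The region where the shifted group \<open>T\<close> and the unshifted complement both win is
  open and meets the connected set \<open>C\<close>, hence is not null.\<close>

lemma win_overlap_not_null:
  fixes \<mu> :: "('a::euclidean_space) measure"
  assumes mu_sets: "sets \<mu> = sets lebesgue"
    and mu_ac: "\<And>A. A \<in> sets lebesgue \<Longrightarrow> (emeasure \<mu> A = 0 \<longleftrightarrow> emeasure lebesgue A = 0)"
    and S_fin: "finite S" and d_cont: "\<And>p. p \<in> S \<Longrightarrow> continuous_on UNIV (d p)"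
    and C: "open C" "connected C"
    and T: "T \<subseteq> S" "T \<noteq> {}" "T \<noteq> S" and delta_pos: "\<delta> > 0"
    and cells_meet_C: "\<And>p. p \<in> S \<Longrightarrow> C \<inter> VR d w S p \<noteq> {}"
  shows "group_wins d (shift_weights w T \<delta>) S T \<inter> group_wins d w S (S - T) \<inter> C \<notin> null_sets \<mu>"
proof -
  define Q' where "Q' = group_wins d (shift_weights w T \<delta>) S T"
  define Q where "Q = group_wins d w S (S - T)"
  have "Q' \<inter> C \<noteq> {}"
  proof -
    obtain t where t: "t \<in> T" using T(2) by blast
    then obtain z where "z \<in> C" "z \<in> VR d w S t" using cells_meet_C T(1) by blast
    moreover have "VR d w S t \<subseteq> VR d (shift_weights w T \<delta>) S t"
      by (rule VR_mono_weights) (use t delta_pos in \<open>auto simp: shift_weights_def\<close>)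
    ultimately show ?thesis
      using VR_subset_group_wins[OF t, of d "shift_weights w T \<delta>" S] unfolding Q'_def by blast
  qed
  moreover have "Q \<inter> C \<noteq> {}"
  proof -
    obtain u where u: "u \<in> S - T" using T(1,3) by blast
    then show ?thesis
      using cells_meet_C[of u] VR_subset_group_wins[OF u, of d w S] unfolding Q_def by blast
  qed
  moreover have open_Q': "open Q'" and open_Q: "open Q"
    unfolding Q'_def Q_def using S_fin T(1) d_cont by (auto intro: open_group_wins)
  moreover have "C \<subseteq> Q' \<union> Q"
    using group_wins_cover[OF finite_subset[OF T(1) S_fin] T(2,1) delta_pos]
    unfolding Q'_def Q_def by blast
  ultimately have "Q' \<inter> Q \<inter> C \<noteq> {}"
    using connectedD[OF C(2) open_Q' open_Q] by blast
  moreover have "open (Q' \<inter> Q \<inter> C)" using open_Q' open_Q C(1) by blast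
  ultimately show ?thesis
    unfolding Q'_def Q_def using open_nonempty_not_null[OF mu_sets mu_ac] by blast
qed

text \<open>Outside the null tie set every point of the overlap lies in the gain of some site
  of \<open>T\<close>, so one of these gains is not null.\<close>

lemma exists_gain_not_null:
  fixes \<mu> :: "('a::euclidean_space) measure"
  assumes mu_sets: "sets \<mu> = sets lebesgue" and adm: "admissible \<mu> d S"
    and S_fin: "finite S" and d_cont: "\<And>p. p \<in> S \<Longrightarrow> continuous_on UNIV (d p)"
    and C: "bounded C" "open C"
    and T: "T \<subseteq> S" "T \<noteq> {}"
    and overlap: "group_wins d (shift_weights w T \<delta>) S T \<inter> group_wins d w S (S - T) \<inter> C
                    \<notin> null_sets \<mu>"
  shows "\<exists>t\<in>T. C \<inter> VR d (shift_weights w T \<delta>) S t - C \<inter> VR d w S t \<notin> null_sets \<mu>"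
proof (rule ccontr)
  assume "\<not> ?thesis"
  then have gains_null:
    "(\<Union>t\<in>T. C \<inter> VR d (shift_weights w T \<delta>) S t - C \<inter> VR d w S t) \<in> null_sets \<mu>"
    using finite_subset[OF T(1) S_fin] by (intro null_sets_UN' countable_finite) auto
  define N where "N = (\<Union>t\<in>T. \<Union>t'\<in>T - {t}. C \<inter> {z. d t z - d t' z = w t - w t'})"
  have N_null: "N \<in> null_sets \<mu>" unfolding N_def
  proof (intro null_sets_UN' countable_finite finite_Diff finite_subset[OF T(1) S_fin])
    fix t t' assume "t \<in> T" "t' \<in> T - {t}"
    then have "t \<in> S" "t' \<in> S" "t \<noteq> t'" using T(1) by auto
    then show "C \<inter> {z. d t z - d t' z = w t - w t'} \<in> null_sets \<mu>"
      using admissible_tie_null[OF mu_sets adm _ _ _ C d_cont d_cont] by blast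
  qed
  let ?O = "group_wins d (shift_weights w T \<delta>) S T \<inter> group_wins d w S (S - T) \<inter> C"
  have "?O - N \<subseteq> (\<Union>t\<in>T. C \<inter> VR d (shift_weights w T \<delta>) S t - C \<inter> VR d w S t)"
  proof
    fix z assume z: "z \<in> ?O - N"
    have "d t z - d t' z \<noteq> w t - w t'" if "t \<in> T" "t' \<in> T" "t \<noteq> t'" for t t'
      using z that unfolding N_def by blast
    then have "\<exists>t\<in>T. z \<in> VR d (shift_weights w T \<delta>) S t - VR d w S t"
      using z by (intro shift_gains_point[OF finite_subset[OF T(1) S_fin] T(2,1)]) blast+
    with z show "z \<in> (\<Union>t\<in>T. C \<inter> VR d (shift_weights w T \<delta>) S t - C \<inter> VR d w S t)" by blast
  qed
  moreover have "open ?O"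
    using S_fin T(1) d_cont C(2) by (intro open_Int open_group_wins) auto
  then have "?O \<in> sets \<mu>" unfolding mu_sets by (rule open_in_sets_lebesgue)
  ultimately have "?O \<in> null_sets \<mu>"
    using null_sets_subset[OF null_sets.Un[OF gains_null N_null]] by blast
  with overlap show False by blast
qed

theorem lemma2:
  fixes \<mu> :: "('a::euclidean_space) measure"
    and d :: "'a \<Rightarrow> 'a \<Rightarrow> real"
    and S T C :: "'a set"
    and w :: "'a \<Rightarrow> real"
    and \<delta> :: real
  assumes mu_sets: "sets \<mu> = sets lebesgue"
    and mu_ac: "\<And>A. A \<in> sets lebesgue \<Longrightarrow> (emeasure \<mu> A = 0 \<longleftrightarrow> emeasure lebesgue A = 0)"
    and S_fin: "finite S"
    and d_cont: "\<And>p. p \<in> S \<Longrightarrow> continuous_on UNIV (d p)"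
    and d_nonneg: "\<And>p z. p \<in> S \<Longrightarrow> d p z \<ge> 0"
    and adm: "admissible \<mu> d S"
    and C_bdd: "bounded C" and C_open: "open C" and C_pc: "path_connected C"
    and T_sub: "T \<subseteq> S" and T_ne: "T \<noteq> {}" and T_neq: "T \<noteq> S"
    and w_pos: "\<And>p. p \<in> S \<Longrightarrow> emeasure \<mu> (C \<inter> VR d w S p) > 0"
    and delta_pos: "\<delta> > 0"
  shows "\<exists>t\<in>T. emeasure \<mu> (C \<inter> VR d (\<lambda>p. if p \<in> T then w p + \<delta> else w p) S t)
                 > emeasure \<mu> (C \<inter> VR d w S t)"
proof -
  have w'_eq: "(\<lambda>p. if p \<in> T then w p + \<delta> else w p) = shift_weights w T \<delta>"
    by (simp add: shift_weights_def)
  have "C \<inter> VR d w S p \<noteq> {}" if "p \<in> S" for p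
    using w_pos[OF that] by auto
  then have "group_wins d (shift_weights w T \<delta>) S T \<inter> group_wins d w S (S - T) \<inter> C
               \<notin> null_sets \<mu>"
    using mu_sets mu_ac S_fin d_cont C_open path_connected_imp_connected[OF C_pc]
      T_sub T_ne T_neq delta_pos
    by (intro win_overlap_not_null[where d = d and w = w]) auto
  then obtain t where t: "t \<in> T"
    and gain: "C \<inter> VR d (shift_weights w T \<delta>) S t - C \<inter> VR d w S t \<notin> null_sets \<mu>"
    using exists_gain_not_null[where d = d, OF mu_sets adm S_fin d_cont C_bdd C_open T_sub T_ne]
    by blast
  text \<open>The cell of \<open>t\<close> only grew, has finite measure, and grew by a non-null set.\<close>
  have tS: "t \<in> S" using t T_sub by blast
  obtain u where u: "u \<in> S" "u \<noteq> t" using t T_sub T_neq by blast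
  have cell_sets: "C \<inter> VR d v S t \<in> sets \<mu>" for v
    unfolding mu_sets using open_VR[OF S_fin tS d_cont] C_open
    by (intro open_in_sets_lebesgue open_Int)
  have C_sets: "C \<in> sets \<mu>" unfolding mu_sets using C_open by (rule open_in_sets_lebesgue)
  have "emeasure \<mu> C < \<infinity>"
    using adm tS u C_bdd C_open unfolding admissible_def by blast
  then have "emeasure \<mu> (C \<inter> VR d w S t) \<noteq> \<infinity>"
    using emeasure_mono[OF Int_lower1 C_sets, of "VR d w S t"] by (auto simp: top_unique)
  moreover have "VR d w S t \<subseteq> VR d (shift_weights w T \<delta>) S t"
    by (rule VR_mono_weights) (use t delta_pos in \<open>auto simp: shift_weights_def\<close>)
  ultimately show ?thesis unfolding w'_eq
    using emeasure_less_if_diff_not_null[OF _ cell_sets cell_sets _ gain] t by blast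
qed

end
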